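(* Let $\Omega\subset\mathbb{R}^d$ be a connected, bounded open domain and let $n\ge 1$. Let $\mathbf{r}=(\mathbf{r}_1,\ldots,\mathbf{r}_n)\in\Upsilon$, where $\mathbf{r}_i=(b_i,\boldsymbol{\omega}_i)$ with $b_i\in\mathbb{R}$, $\boldsymbol{\omega}_i\in\mathcal{S}^{d-1}$ and $\mathcal{P}_i(\mathbf{r}_i)\cap\Omega\neq\emptyset$ for each $i$. Assume the hyperplanes $\mathcal{P}_1(\mathbf{r}_1),\ldots,\mathcal{P}_n(\mathbf{r}_n)$ are pairwise distinct. Then the functions $\sigma_0,\sigma_1,\ldots,\sigma_n$ are linearly independent as functions on $\Omega$.
   Context: $\sigma(t)=\max\{0,t\}$ is the ReLU function. $\mathcal{S}^{d-1}$ is the unit sphere in $\mathbb{R}^d$. For $\mathbf{x}\in\mathbb{R}^d$ write $\mathbf{y}=(1,x_1,\ldots,x_d)^T$. For $\mathbf{r}_i=(b_i,\boldsymbol{\omega}_i)\in\mathbb{R}^{d+1}$, the breaking hyperplane is $\mathcal{P}_i(\mathbf{r}_i)=\{\mathbf{x}\in\Omega:\boldsymbol{\omega}_i\cdot\mathbf{x}+b_i=0\}$ (hyperplanes are compared as hyperplanes $\{\mathbf{x}\in\mathbb{R}^d:\boldsymbol{\omega}_i\cdot\mathbf{x}+b_i=0\}$). The admissible set is $\Upsilon=\{\mathbf{r}=(\mathbf{r}_1,\ldots,\mathbf{r}_n): \mathbf{r}_i=(b_i,\boldsymbol{\omega}_i),\ b_i\in\mathbb{R},\ \boldsymbol{\omega}_i\in\mathcal{S}^{d-1},\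 \mathcal{P}_i(\mathbf{r}_i)\cap\Omega\neq\emptyset\}$. Define $\sigma_0(\mathbf{x})=1$ and $\sigma_i(\mathbf{x})=\sigma(\mathbf{r}_i\cdot\mathbf{y})=\sigma(\boldsymbol{\omega}_i\cdot\mathbf{x}+b_i)$ for $i=1,\ldots,n$. *)

theory Defs
  imports "HOL-Analysis.Analysis"
begin

definition relu :: "real \<Rightarrow> real" where
  "relu t = max 0 t"

definition hyperplane_of :: "real \<Rightarrow> 'a::euclidean_space \<Rightarrow> 'a set" where
  "hyperplane_of b w = {x. w \<bullet> x + b = 0}"

definition sigma_fun :: "(nat \<Rightarrow> real) \<Rightarrow> (nat \<Rightarrow> 'a::euclidean_space) \<Rightarrow> nat \<Rightarrow> 'a \<Rightarrow> real" where
  "sigma_fun b w i x = (if i = 0 then 1 else relu (w i \<bullet> x + b i))"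

definition lin_indep_on :: "'a set \<Rightarrow> nat \<Rightarrow> (nat \<Rightarrow> 'a \<Rightarrow> real) \<Rightarrow> bool" where
  "lin_indep_on \<Omega> n f \<longleftrightarrow>
     (\<forall>c :: nat \<Rightarrow> real. (\<forall>x\<in>\<Omega>. (\<Sum>i\<in>{0..n}. c i * f i x) = 0) \<longrightarrow> (\<forall>i\<in>{0..n}. c i = 0))"

end

theory Submission
  imports Defs
begin

text \<open>
  Fix i \<ge> 1. Some p \<in> \<Omega> lies on the i-th hyperplane but on no other one: project onto it a
  generic point of a small ball around a point of its trace in \<Omega>; the bad points form finitely
  many affine hyperplanes, a negligible set. Along the normal w_i through p every \<sigma>_k with
  k \<noteq> i is affine on a short segment, whereas \<sigma>_i has a kink at p. Hence the second difference
  of \<Sum> c_k \<sigma>_k at p with step s along w_i is c_i s, forcing c_i = 0; then c_0 = 0 by evaluation.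
\<close>

lemma relu_add_diff_eq:
  assumes "\<bar>u\<bar> < \<bar>a\<bar>"
  shows "relu (a + u) + relu (a - u) = 2 * relu a"
  using assms by (auto simp: relu_def abs_if max_def)

lemma exists_pos_less_finite:
  fixes A :: "real set"
  assumes "finite A" and "\<And>a. a \<in> A \<Longrightarrow> 0 < a"
  shows "\<exists>s>0. \<forall>a\<in>A. s < a"
proof -
  define m where "m = Min (insert 1 A)"
  have "0 < m" unfolding m_def using assms by (subst Min_gr_iff) auto
  moreover have "m \<le> a" if "a \<in> A" for a unfolding m_def using assms(1) that by simp
  ultimately show ?thesis by (intro exI[of _ "m / 2"]) force
qed

lemma inner_hyperplane_projection:
  fixes w x :: "'a::euclidean_space"
  assumes "norm w = 1"
  shows "w \<bullet> (x - (w \<bullet> x + b) *\<^sub>R w) + b = 0"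
  using assms by (simp add: inner_diff_right norm_eq_1)

lemma norm_minus_projection_le:
  fixes w v :: "'a::euclidean_space"
  assumes "norm w = 1"
  shows "norm (v - (w \<bullet> v) *\<^sub>R w) \<le> norm v"
proof -
  have ww: "w \<bullet> w = 1" using assms by (simp add: norm_eq_1)
  have "(norm (v - (w \<bullet> v) *\<^sub>R w))\<^sup>2 = (v - (w \<bullet> v) *\<^sub>R w) \<bullet> (v - (w \<bullet> v) *\<^sub>R w)"
    by (rule power2_norm_eq_inner)
  also have "\<dots> = v \<bullet> v - (w \<bullet> v)\<^sup>2"
    by (simp add: inner_diff_left inner_diff_right ww inner_commute power2_eq_square algebra_simps)
  also have "\<dots> \<le> (norm v)\<^sup>2" by (simp add: power2_norm_eq_inner)
  finally show ?thesis by (rule power2_le_imp_le) simp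
qed

lemma dist_hyperplane_projection_le:
  fixes w x q :: "'a::euclidean_space"
  assumes "norm w = 1" and "w \<bullet> q + b = 0"
  shows "dist (x - (w \<bullet> x + b) *\<^sub>R w) q \<le> dist x q"
proof -
  have "w \<bullet> (x - q) = w \<bullet> x + b" using assms(2) by (simp add: inner_diff_right)
  have eq: "x - (w \<bullet> x + b) *\<^sub>R w - q = (x - q) - (w \<bullet> (x - q)) *\<^sub>R w"
    unfolding \<open>w \<bullet> (x - q) = w \<bullet> x + b\<close> by (simp add: algebra_simps)
  show ?thesis
    unfolding dist_norm eq by (rule norm_minus_projection_le[OF assms(1)])
qed

text \<open>
  The points whose projection onto the hyperplane {w \<bullet> x + b = 0} lies on a different
  hyperplane {v \<bullet> x + c = 0} form an affine hyperplane, unless v is parallel to w; but then the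
  two hyperplanes would coincide.
\<close>
lemma negligible_hyperplane_projection_preimage:
  fixes v w :: "'a::euclidean_space"
  assumes "norm w = 1" and "v \<noteq> 0" and "hyperplane_of c v \<noteq> hyperplane_of b w"
  shows "negligible {x. v \<bullet> (x - (w \<bullet> x + b) *\<^sub>R w) + c = 0}"
proof -
  define l where "l = v \<bullet> w"
  define u where "u = v - l *\<^sub>R w"
  have "v \<bullet> (x - (w \<bullet> x + b) *\<^sub>R w) + c = u \<bullet> x - (b * l - c)" for x
    by (simp add: u_def l_def inner_diff_left inner_diff_right inner_commute algebra_simps)
  then have eq: "{x. v \<bullet> (x - (w \<bullet> x + b) *\<^sub>R w) + c = 0} = {x. u \<bullet> x = b * l - c}"
    by auto
  have "u \<noteq> 0 \<or> b * l - c \<noteq> 0"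
  proof (rule ccontr)
    assume "\<not> ?thesis"
    then have v: "v = l *\<^sub>R w" and c: "c = l * b" by (auto simp: u_def)
    then have "l \<noteq> 0" using assms(2) by auto
    then have "hyperplane_of c v = hyperplane_of b w"
      unfolding hyperplane_of_def v c by (auto simp: distrib_left[symmetric])
    then show False using assms(3) by blast
  qed
  then show ?thesis unfolding eq by (rule negligible_hyperplane)
qed

lemma exists_point_on_hyperplane_off_others:
  fixes \<Omega> :: "'a::euclidean_space set" and w :: "nat \<Rightarrow> 'a"
  assumes "open \<Omega>" and "norm (w i) = 1" and "hyperplane_of (b i) (w i) \<inter> \<Omega> \<noteq> {}"
    and "finite J"
    and "\<And>j. j \<in> J \<Longrightarrow> w j \<noteq> 0 \<and> hyperplane_of (b j) (w j) \<noteq> hyperplane_of (b i) (w i)"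
  shows "\<exists>p\<in>\<Omega>. w i \<bullet> p + b i = 0 \<and> (\<forall>j\<in>J. w j \<bullet> p + b j \<noteq> 0)"
proof -
  define proj where "proj x = x - (w i \<bullet> x + b i) *\<^sub>R w i" for x
  define B where "B j = {x. w j \<bullet> proj x + b j = 0}" for j
  obtain q where q: "q \<in> \<Omega>" "w i \<bullet> q + b i = 0"
    using assms(3) by (auto simp: hyperplane_of_def)
  obtain r where r: "r > 0" "ball q r \<subseteq> \<Omega>" using assms(1) q(1) open_contains_ball by blast
  have "negligible (B j)" if "j \<in> J" for j
    unfolding B_def proj_def using assms(2) assms(5)[OF that]
    by (intro negligible_hyperplane_projection_preimage) auto
  then have "negligible (\<Union>(B ` J))" using assms(4) by (intro negligible_Union) auto
  moreover have "\<not> negligible (ball q r)" using r(1) by (intro open_not_negligible) auto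
  ultimately have "\<not> ball q r \<subseteq> \<Union>(B ` J)" using negligible_subset by blast
  then obtain x where x: "x \<in> ball q r" "\<forall>j\<in>J. x \<notin> B j" by blast
  have "dist (proj x) q \<le> dist x q"
    unfolding proj_def using assms(2) q(2) by (rule dist_hyperplane_projection_le)
  then have "proj x \<in> ball q r" using x(1) by (simp add: dist_commute)
  then have "proj x \<in> \<Omega>" using r(2) by blast
  moreover have "w i \<bullet> proj x + b i = 0"
    unfolding proj_def using assms(2) by (rule inner_hyperplane_projection)
  ultimately show ?thesis using x(2) by (auto simp: B_def)
qed

lemma relu_second_difference_on_hyperplane:
  fixes w p :: "'a::euclidean_space"
  assumes "norm w = 1" and "w \<bullet> p + b = 0" and "0 \<le> s"
  shows "relu (w \<bullet> (p + s *\<^sub>R w) + b) + relu (w \<bullet> (p - s *\<^sub>R w) + b) - 2 * relu (w \<bullet> p + b) = s"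
  using assms by (simp add: relu_def inner_add_right inner_diff_right norm_eq_1 algebra_simps)

lemma relu_second_difference_off_hyperplane:
  fixes v w p :: "'a::euclidean_space"
  assumes "norm v \<le> 1" and "norm w = 1" and "0 \<le> s" and "s < \<bar>v \<bullet> p + c\<bar>"
  shows "relu (v \<bullet> (p + s *\<^sub>R w) + c) + relu (v \<bullet> (p - s *\<^sub>R w) + c) = 2 * relu (v \<bullet> p + c)"
proof -
  have "\<bar>v \<bullet> w\<bar> \<le> 1"
    using Cauchy_Schwarz_ineq2[of v w] assms(1,2) by simp
  then have "\<bar>s * (v \<bullet> w)\<bar> \<le> s" using assms(3) by (simp add: abs_mult mult_left_le)
  then have "\<bar>s * (v \<bullet> w)\<bar> < \<bar>v \<bullet> p + c\<bar>" using assms(4) by linarith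
  from relu_add_diff_eq[OF this] show ?thesis
    by (simp add: inner_add_right inner_diff_right algebra_simps)
qed

lemma sigma_fun_second_difference:
  assumes "i \<noteq> 0" and "norm (w i) = 1" and "w i \<bullet> p + b i = 0" and "0 \<le> s"
    and "k \<noteq> 0 \<Longrightarrow> k \<noteq> i \<Longrightarrow> norm (w k) \<le> 1 \<and> s < \<bar>w k \<bullet> p + b k\<bar>"
  shows "sigma_fun b w k (p + s *\<^sub>R w i) + sigma_fun b w k (p - s *\<^sub>R w i) - 2 * sigma_fun b w k p
         = (if k = i then s else 0)"
  using assms relu_second_difference_on_hyperplane[OF assms(2-4)]
    relu_second_difference_off_hyperplane[of "w k" "w i" s p "b k"]
  by (auto simp: sigma_fun_def)

lemma sigma_fun_coefficient_eq_0:
  fixes \<Omega> :: "'a::euclidean_space set" and w :: "nat \<Rightarrow> 'a"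
  assumes "open \<Omega>"
    and norm_w: "\<And>k. k \<in> {1..n} \<Longrightarrow> norm (w k) = 1"
    and "hyperplane_of (b i) (w i) \<inter> \<Omega> \<noteq> {}"
    and distinct: "\<And>j. j \<in> {1..n} \<Longrightarrow> j \<noteq> i \<Longrightarrow>
           hyperplane_of (b j) (w j) \<noteq> hyperplane_of (b i) (w i)"
    and i: "i \<in> {1..n}"
    and vanish: "\<And>x. x \<in> \<Omega> \<Longrightarrow> (\<Sum>k\<in>{0..n}. c k * sigma_fun b w k x) = 0"
  shows "c i = 0"
proof -
  define J where "J = {1..n} - {i}"
  define S where "S x = (\<Sum>k\<in>{0..n}. c k * sigma_fun b w k x)" for x
  have wi: "norm (w i) = 1" using norm_w i by blast
  obtain p where p: "p \<in> \<Omega>" "w i \<bullet> p + b i = 0" "\<forall>j\<in>J. w j \<bullet> p + b j \<noteq> 0"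
    using exists_point_on_hyperplane_off_others[of \<Omega> w i b J] assms(1,3) wi
      norm_w distinct by (fastforce simp: J_def)
  obtain \<rho> where \<rho>: "\<rho> > 0" "ball p \<rho> \<subseteq> \<Omega>" using assms(1) p(1) open_contains_ball by blast
  have "\<exists>s>0. \<forall>a\<in>insert \<rho> ((\<lambda>j. \<bar>w j \<bullet> p + b j\<bar>) ` J). s < a"
    using \<rho>(1) p(3) by (intro exists_pos_less_finite) (auto simp: J_def)
  then obtain s where s: "s > 0" "s < \<rho>" "\<forall>j\<in>J. s < \<bar>w j \<bullet> p + b j\<bar>" by auto
  have "p + s *\<^sub>R w i \<in> \<Omega>" "p - s *\<^sub>R w i \<in> \<Omega>"
    using \<rho>(2) s wi by (auto simp: dist_norm)
  then have "0 = S (p + s *\<^sub>R w i) + S (p - s *\<^sub>R w i) - 2 * S p"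
    using vanish p(1) by (simp add: S_def)
  also have "\<dots> = (\<Sum>k\<in>{0..n}. c k * (sigma_fun b w k (p + s *\<^sub>R w i)
      + sigma_fun b w k (p - s *\<^sub>R w i) - 2 * sigma_fun b w k p))"
    unfolding S_def
    by (simp add: sum.distrib[symmetric] sum_subtractf[symmetric] sum_distrib_left algebra_simps)
  also have "\<dots> = (\<Sum>k\<in>{0..n}. if k = i then c i * s else 0)"
  proof (rule sum.cong[OF refl])
    fix k assume "k \<in> {0..n}"
    then have "sigma_fun b w k (p + s *\<^sub>R w i) + sigma_fun b w k (p - s *\<^sub>R w i)
        - 2 * sigma_fun b w k p = (if k = i then s else 0)"
      using i s p(3) norm_w
      by (intro sigma_fun_second_difference[of i w p b s]) (use wi p(2) in \<open>auto simp: J_def\<close>)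
    then show "c k * (sigma_fun b w k (p + s *\<^sub>R w i) + sigma_fun b w k (p - s *\<^sub>R w i)
        - 2 * sigma_fun b w k p) = (if k = i then c i * s else 0)" by simp
  qed
  also have "\<dots> = c i * s" using i by simp
  finally show ?thesis using s(1) by simp
qed

theorem lemma2p1:
  fixes \<Omega> :: "'a::euclidean_space set"
    and n :: nat
    and b :: "nat \<Rightarrow> real"
    and w :: "nat \<Rightarrow> 'a"
  assumes "open \<Omega>" and "connected \<Omega>" and "bounded \<Omega>"
    and "n \<ge> 1"
    and "\<And>i. i \<in> {1..n} \<Longrightarrow> norm (w i) = 1"
    and "\<And>i. i \<in> {1..n} \<Longrightarrow> hyperplane_of (b i) (w i) \<inter> \<Omega> \<noteq> {}"
    and "\<And>i j. i \<in> {1..n} \<Longrightarrow> j \<in> {1..n} \<Longrightarrow> i \<noteq> j \<Longrightarrow>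
           hyperplane_of (b i) (w i) \<noteq> hyperplane_of (b j) (w j)"
  shows "lin_indep_on \<Omega> n (sigma_fun b w)"
  unfolding lin_indep_on_def
proof (intro allI impI)
  fix c :: "nat \<Rightarrow> real"
  assume vanish: "\<forall>x\<in>\<Omega>. (\<Sum>k\<in>{0..n}. c k * sigma_fun b w k x) = 0"
  have c: "c i = 0" if "i \<in> {1..n}" for i
  proof (rule sigma_fun_coefficient_eq_0[where i = i and c = c])
    show "hyperplane_of (b j) (w j) \<noteq> hyperplane_of (b i) (w i)" if "j \<in> {1..n}" "j \<noteq> i" for j
      using assms(7) that \<open>i \<in> {1..n}\<close> by blast
  qed (use assms(1,5,6) that vanish in auto)
  obtain x where x: "x \<in> \<Omega>" using assms(6)[of 1] assms(4) by auto
  have "{0..n} = insert 0 {1..n}" by auto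
  then have "(\<Sum>k\<in>{0..n}. c k * sigma_fun b w k x) = c 0"
    using c by (simp add: sigma_fun_def)
  then have c0: "c 0 = 0" using vanish x by simp
  show "\<forall>i\<in>{0..n}. c i = 0"
  proof
    fix i assume "i \<in> {0..n}"
    then show "c i = 0" using c0 c by (cases "i = 0") auto
  qed
qed

end
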